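(* Let $\rho\in(0,\infty)$ and $d=d(L)\to0$ with $dL\to\infty$. Let $h\in\mathcal D(\hat A)$ and $H(\mu)=\mu(h)$. Then $$\lim_{N/L\to\rho}\ \sup_{\eta\in\Omega_{L,N}}\Big|\frac1{dL}\mathfrak L_{L,N}\big(H\circ\hat\mu_{L,N}^{(\cdot)}\big)(\eta)-\hat\mu_{L,N}^{(\eta)}(\hat Ah)\Big|=0.$$
   Context: Inclusion process: $\Omega_{L,N}=\{\eta\in\mathbb N_0^L:\sum_x\eta_x=N\}$, $\mathfrak L_{L,N}f(\eta)=\sum_{x\ne y}\eta_x(d+\eta_y)[f(\eta^{x,y})-f(\eta)]$, $\eta^{x,y}=\eta-e^x+e^y$; "$N/L\to\rho$" means $N,L\to\infty$ with $N/L\to\rho$. $\overline{\mathbb R}_+=[0,\infty]$; $\hat\mu^{(\eta)}_{L,N}=\sum_x\frac{\eta_x}N\delta_{dL\eta_x/N}$. $\hat Ah(z)=zh''(z)+(2-z)h'(z)+(h(0)-h(z))$ on $\mathcal D(\hat A)=\{h\in C(\overline{\mathbb R}_+):h(\infty)=0,h|_{\mathbb R_+}\in C_c^3(\mathbb R_+)\}\cup\{\text{constants}\}$. *)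

theory Defs
  imports "HOL-Analysis.Analysis"
begin

definition Omega :: "nat \<Rightarrow> nat \<Rightarrow> (nat \<Rightarrow> nat) set" where
  "Omega L N = {\<eta>. (\<forall>x\<ge>L. \<eta> x = 0) \<and> (\<Sum>x<L. \<eta> x) = N}"

definition move :: "(nat \<Rightarrow> nat) \<Rightarrow> nat \<Rightarrow> nat \<Rightarrow> (nat \<Rightarrow> nat)" where
  "move \<eta> x y = (\<lambda>z. if z = x then \<eta> x - 1 else if z = y then \<eta> y + 1 else \<eta> z)"

definition gen :: "nat \<Rightarrow> real \<Rightarrow> ((nat \<Rightarrow> nat) \<Rightarrow> real) \<Rightarrow> (nat \<Rightarrow> nat) \<Rightarrow> real" where
  "gen L d f \<eta> = (\<Sum>x<L. \<Sum>y\<in>{..<L} - {x}.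
      real (\<eta> x) * (d + real (\<eta> y)) * (f (move \<eta> x y) - f \<eta>))"

text \<open>hat mu^{(eta)}_{L,N} integrated against h: sum_x eta_x/N * h(d L eta_x / N).\<close>
definition muhat :: "nat \<Rightarrow> nat \<Rightarrow> real \<Rightarrow> (nat \<Rightarrow> nat) \<Rightarrow> (real \<Rightarrow> real) \<Rightarrow> real" where
  "muhat L N d \<eta> h = (\<Sum>x<L. real (\<eta> x) / real N * h (d * real L * real (\<eta> x) / real N))"

definition D1 :: "(real \<Rightarrow> real) \<Rightarrow> real \<Rightarrow> real" where
  "D1 h x = vector_derivative h (at x within {0..})"

definition C3_half :: "(real \<Rightarrow> real) \<Rightarrow> bool" where
  "C3_half h \<longleftrightarrow> (\<exists>h1 h2 h3. (\<forall>x\<ge>0.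
       (h has_vector_derivative h1 x) (at x within {0..}) \<and>
       (h1 has_vector_derivative h2 x) (at x within {0..}) \<and>
       (h2 has_vector_derivative h3 x) (at x within {0..})) \<and>
     continuous_on {0..} h3)"

text \<open>Domain of hat A (functions restricted to the finite part [0,oo);
  compact support gives h(oo)=0 and continuity on [0,oo]).\<close>
definition DA :: "(real \<Rightarrow> real) set" where
  "DA = {h. (C3_half h \<and> (\<exists>R. \<forall>x\<ge>R. h x = 0)) \<or> (\<exists>c. \<forall>x\<ge>0. h x = c)}"

definition Ahat :: "(real \<Rightarrow> real) \<Rightarrow> real \<Rightarrow> real" where
  "Ahat h z = z * D1 (D1 h) z + (2 - z) * D1 h z + (h 0 - h z)"

end

theory Submission
  imports Defs
begin

text \<open>
  Put \<open>p(u) = u h(u)\<close> and \<open>a = dL/N\<close>. A site with \<open>k\<close> particles contributes \<open>p(ak)/(dL)\<close>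
  to \<open>\<mu>(h)\<close>, and a jump changes only the two sites involved, so summing the jump rates site by
  site writes the rescaled generator applied to \<open>\<mu>(h)\<close> as a sum of forward and backward
  differences of \<open>p\<close> with mesh \<open>a\<close>. Third order Taylor expansion turns the contribution of a site
  into \<open>k/N (p''(ak) - p'(ak) + p'(0)) = k/N (Ahat h)(ak)\<close>, with an error of order
  \<open>a + d + 1/(dL)\<close> per unit mass, uniformly in the configuration. The delicate term is
  \<open>k\<^sup>2\<close> times a second difference of \<open>p\<close>, with \<open>k\<close> up to \<open>N\<close>; it stays small because
  \<open>p\<close> is linear outside a compact set, which is where \<open>h(\<infinity>) = 0\<close> or \<open>h\<close> constant enters.
\<close>

section \<open>Derivatives on the half-line\<close>

lemma at_within_Ici_nontrivial:
  fixes u :: real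
  assumes "0 \<le> u"
  shows "at u within {0..} \<noteq> bot"
proof
  assume "at u within {0..} = bot"
  moreover have "at u within {u..} \<le> at u within {0..}"
    using assms by (intro at_le) auto
  ultimately have "at_right u \<le> (bot :: real filter)"
    by (simp add: at_within_Ici_at_right)
  then show False
    using le_bot trivial_limit_at_right_real by blast
qed

lemma D1_eqI:
  assumes "(h has_vector_derivative h') (at u within {0..})" and "0 \<le> u"
  shows "D1 h u = h'"
  unfolding D1_def
  by (rule vector_derivative_within[OF at_within_Ici_nontrivial[OF assms(2)] assms(1)])

lemma Ahat_eq_derivatives:
  assumes h1: "\<And>x. 0 \<le> x \<Longrightarrow> (h has_vector_derivative h1 x) (at x within {0..})"
    and h2: "\<And>x. 0 \<le> x \<Longrightarrow> (h1 has_vector_derivative h2 x) (at x within {0..})"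
    and "0 \<le> u"
  shows "Ahat h u = u * h2 u + (2 - u) * h1 u + (h 0 - h u)"
proof -
  have D1_h: "D1 h x = h1 x" if "0 \<le> x" for x
    by (rule D1_eqI[OF h1[OF that] that])
  have "(D1 h has_vector_derivative h2 u) (at u within {0..})"
    by (rule has_vector_derivative_transform_within[of h1 "h2 u" u "{0..}" 1])
       (use h2 D1_h \<open>0 \<le> u\<close> in auto)
  then have "D1 (D1 h) u = h2 u"
    using D1_eqI \<open>0 \<le> u\<close> by blast
  then show ?thesis
    using D1_h \<open>0 \<le> u\<close> by (simp add: Ahat_def)
qed

lemma derivative_bound_Ici:
  fixes f f' :: "real \<Rightarrow> real"
  assumes "\<And>v. 0 \<le> v \<Longrightarrow> (f has_real_derivative f' v) (at v within {0..})"
    and "\<And>v. 0 \<le> v \<Longrightarrow> \<bar>f' v\<bar> \<le> M" and "0 \<le> v" "0 \<le> w"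
  shows "\<bar>f v - f w\<bar> \<le> M * \<bar>v - w\<bar>"
  using field_differentiable_bound[of "{0..}" f f' M v w] assms by auto

lemma cubic_bound_of_vanishing_jet:
  fixes f0 f1 f2 f3 :: "real \<Rightarrow> real"
  assumes t: "0 \<le> t"
    and d0: "\<And>s. s \<in> {0..t} \<Longrightarrow> (f0 has_real_derivative f1 s) (at s within {0..t})"
    and d1: "\<And>s. s \<in> {0..t} \<Longrightarrow> (f1 has_real_derivative f2 s) (at s within {0..t})"
    and d2: "\<And>s. s \<in> {0..t} \<Longrightarrow> (f2 has_real_derivative f3 s) (at s within {0..t})"
    and z: "f0 0 = 0" "f1 0 = 0" "f2 0 = 0"
    and M: "\<And>s. s \<in> {0..t} \<Longrightarrow> \<bar>f3 s\<bar> \<le> M"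
  shows "\<bar>f0 t\<bar> \<le> M * t ^ 3"
proof -
  have b2: "\<bar>f2 s\<bar> \<le> M * t" if "s \<in> {0..t}" for s
  proof -
    have "norm (f2 s - f2 0) \<le> M * norm (s - 0)"
      by (rule field_differentiable_bound[of "{0..t}"]) (use d2 M that t in auto)
    moreover have "M * norm (s - 0) \<le> M * t"
      using that M[of 0] t by (intro mult_left_mono) auto
    ultimately show ?thesis using z by simp
  qed
  have b1: "\<bar>f1 s\<bar> \<le> M * t * t" if "s \<in> {0..t}" for s
  proof -
    have "norm (f1 s - f1 0) \<le> (M * t) * norm (s - 0)"
      by (rule field_differentiable_bound[of "{0..t}"]) (use d1 b2 that t in auto)
    moreover have "(M * t) * norm (s - 0) \<le> M * t * t"
      using that M[of 0] t by (intro mult_left_mono) auto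
    ultimately show ?thesis using z by simp
  qed
  have "norm (f0 t - f0 0) \<le> (M * t * t) * norm (t - 0)"
    by (rule field_differentiable_bound[of "{0..t}"]) (use d0 b1 t in auto)
  then show ?thesis using z t by (simp add: power3_eq_cube mult_ac)
qed

lemma DERIV_Ici_shift_plus:
  fixes f f' :: "real \<Rightarrow> real"
  assumes "\<And>v. 0 \<le> v \<Longrightarrow> (f has_real_derivative f' v) (at v within {0..})"
    and "0 \<le> u" "s \<in> {0..a}"
  shows "((\<lambda>s. f (u + s)) has_real_derivative f' (u + s)) (at s within {0..a})"
proof -
  have "(f has_real_derivative f' (u + s)) (at ((\<lambda>s. u + s) s) within ((\<lambda>s. u + s) ` {0..a}))"
    by (rule DERIV_subset[OF assms(1)]) (use assms in auto)
  moreover have "((\<lambda>s. u + s) has_real_derivative 1) (at s within {0..a})"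
    by (auto intro!: derivative_eq_intros)
  ultimately show ?thesis
    using DERIV_image_chain by (fastforce simp: o_def)
qed

lemma DERIV_Ici_shift_minus:
  fixes f f' :: "real \<Rightarrow> real"
  assumes "\<And>v. 0 \<le> v \<Longrightarrow> (f has_real_derivative f' v) (at v within {0..})"
    and "a \<le> u" "s \<in> {0..a}"
  shows "((\<lambda>s. f (u - s)) has_real_derivative - f' (u - s)) (at s within {0..a})"
proof -
  have "(f has_real_derivative f' (u - s)) (at ((\<lambda>s. u - s) s) within ((\<lambda>s. u - s) ` {0..a}))"
    by (rule DERIV_subset[OF assms(1)]) (use assms in auto)
  moreover have "((\<lambda>s. u - s) has_real_derivative -1) (at s within {0..a})"
    by (auto intro!: derivative_eq_intros)
  ultimately show ?thesis
    using DERIV_image_chain by (fastforce simp: o_def)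
qed

section \<open>Profiles with three bounded derivatives\<close>

locale cubic_profile =
  fixes p p1 p2 p3 :: "real \<Rightarrow> real" and M1 M2 M3 R c :: real
  assumes has_deriv_p: "\<And>v. 0 \<le> v \<Longrightarrow> (p has_real_derivative p1 v) (at v within {0..})"
    and has_deriv_p1: "\<And>v. 0 \<le> v \<Longrightarrow> (p1 has_real_derivative p2 v) (at v within {0..})"
    and has_deriv_p2: "\<And>v. 0 \<le> v \<Longrightarrow> (p2 has_real_derivative p3 v) (at v within {0..})"
    and bound_p1: "\<And>v. 0 \<le> v \<Longrightarrow> \<bar>p1 v\<bar> \<le> M1"
    and bound_p2: "\<And>v. 0 \<le> v \<Longrightarrow> \<bar>p2 v\<bar> \<le> M2"
    and bound_p3: "\<And>v. 0 \<le> v \<Longrightarrow> \<bar>p3 v\<bar> \<le> M3"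
    and nonneg_R: "0 \<le> R"
    and linear_beyond: "\<And>u. R \<le> u \<Longrightarrow> p u = c * u"
begin

lemma bounds_nonneg: "0 \<le> M1" "0 \<le> M2" "0 \<le> M3"
  using bound_p1[of 0] bound_p2[of 0] bound_p3[of 0] by auto

lemma taylor_plus:
  assumes "0 \<le> u" "0 \<le> a"
  shows "\<bar>p (u + a) - p u - a * p1 u - a^2/2 * p2 u\<bar> \<le> M3 * a^3"
proof -
  have "\<bar>(\<lambda>s. p (u + s) - p u - s * p1 u - s^2/2 * p2 u) a\<bar> \<le> M3 * a^3"
  proof (rule cubic_bound_of_vanishing_jet[OF \<open>0 \<le> a\<close>])
    fix s assume s: "s \<in> {0..a}"
    show "((\<lambda>s. p (u + s) - p u - s * p1 u - s^2/2 * p2 u) has_real_derivative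
        (\<lambda>s. p1 (u + s) - p1 u - s * p2 u) s) (at s within {0..a})"
      using DERIV_Ici_shift_plus[OF has_deriv_p \<open>0 \<le> u\<close> s] by (auto intro!: derivative_eq_intros)
    show "((\<lambda>s. p1 (u + s) - p1 u - s * p2 u) has_real_derivative
        (\<lambda>s. p2 (u + s) - p2 u) s) (at s within {0..a})"
      using DERIV_Ici_shift_plus[OF has_deriv_p1 \<open>0 \<le> u\<close> s] by (auto intro!: derivative_eq_intros)
    show "((\<lambda>s. p2 (u + s) - p2 u) has_real_derivative (\<lambda>s. p3 (u + s)) s) (at s within {0..a})"
      using DERIV_Ici_shift_plus[OF has_deriv_p2 \<open>0 \<le> u\<close> s] by (auto intro!: derivative_eq_intros)
    show "\<bar>p3 (u + s)\<bar> \<le> M3"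
      using bound_p3 \<open>0 \<le> u\<close> s by auto
  qed auto
  then show ?thesis by simp
qed

lemma taylor_minus:
  assumes "a \<le> u" "0 \<le> a"
  shows "\<bar>p (u - a) - p u + a * p1 u - a^2/2 * p2 u\<bar> \<le> M3 * a^3"
proof -
  have "\<bar>(\<lambda>s. p (u - s) - p u + s * p1 u - s^2/2 * p2 u) a\<bar> \<le> M3 * a^3"
  proof (rule cubic_bound_of_vanishing_jet[OF \<open>0 \<le> a\<close>])
    fix s assume s: "s \<in> {0..a}"
    show "((\<lambda>s. p (u - s) - p u + s * p1 u - s^2/2 * p2 u) has_real_derivative
        (\<lambda>s. - p1 (u - s) + p1 u - s * p2 u) s) (at s within {0..a})"
      using DERIV_Ici_shift_minus[OF has_deriv_p \<open>a \<le> u\<close> s] by (auto intro!: derivative_eq_intros)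
    show "((\<lambda>s. - p1 (u - s) + p1 u - s * p2 u) has_real_derivative
        (\<lambda>s. p2 (u - s) - p2 u) s) (at s within {0..a})"
      using DERIV_Ici_shift_minus[OF has_deriv_p1 \<open>a \<le> u\<close> s] by (auto intro!: derivative_eq_intros)
    show "((\<lambda>s. p2 (u - s) - p2 u) has_real_derivative (\<lambda>s. - p3 (u - s)) s) (at s within {0..a})"
      using DERIV_Ici_shift_minus[OF has_deriv_p2 \<open>a \<le> u\<close> s] by (auto intro!: derivative_eq_intros)
    show "\<bar>- p3 (u - s)\<bar> \<le> M3"
      using bound_p3 \<open>a \<le> u\<close> s by auto
  qed auto
  then show ?thesis by simp
qed

lemma second_difference_bound:
  assumes "0 \<le> a" "a \<le> u"
  shows "\<bar>p (u + a) + p (u - a) - 2 * p u\<bar> \<le> a^2 * M2 + 2 * a^3 * M3"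
proof -
  define X where "X = p (u + a) - p u - a * p1 u - a^2/2 * p2 u"
  define Y where "Y = p (u - a) - p u + a * p1 u - a^2/2 * p2 u"
  have "\<bar>X\<bar> \<le> M3 * a^3" "\<bar>Y\<bar> \<le> M3 * a^3"
    unfolding X_def Y_def using taylor_plus[of u a] taylor_minus[of a u] assms by auto
  moreover have "\<bar>a^2 * p2 u\<bar> \<le> a^2 * M2"
    using bound_p2[of u] assms by (simp add: abs_mult mult_left_mono)
  moreover have "p (u + a) + p (u - a) - 2 * p u = X + Y + a^2 * p2 u"
    unfolding X_def Y_def by (simp add: algebra_simps)
  moreover have "2 * a^3 * M3 = M3 * a^3 + M3 * a^3"
    by simp
  ultimately show ?thesis
    by (simp only:)
qed

lemma weighted_second_difference_bound:
  assumes "0 \<le> a" "a \<le> u"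
  shows "u * \<bar>p (u + a) + p (u - a) - 2 * p u\<bar> \<le> (R + a) * (a^2 * M2 + 2 * a^3 * M3)"
proof (cases "u < R + a")
  case True
  then have "u * \<bar>p (u + a) + p (u - a) - 2 * p u\<bar> \<le> (R + a) * \<bar>p (u + a) + p (u - a) - 2 * p u\<bar>"
    by (intro mult_right_mono) auto
  also have "\<dots> \<le> (R + a) * (a^2 * M2 + 2 * a^3 * M3)"
    using second_difference_bound[OF assms] nonneg_R assms by (intro mult_left_mono) auto
  finally show ?thesis .
next
  case False
  then have "p (u + a) + p (u - a) - 2 * p u = 0"
    using assms by (simp add: linear_beyond algebra_simps)
  then show ?thesis
    using nonneg_R bounds_nonneg assms by simp
qed

end

section \<open>The domain of \<open>Ahat\<close>\<close>

lemma derivative_vanishes_beyond: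
  fixes f f' :: "real \<Rightarrow> real"
  assumes "\<And>x. 0 \<le> x \<Longrightarrow> (f has_vector_derivative f' x) (at x within {0..})"
    and "0 \<le> R" and "\<And>x. R < x \<Longrightarrow> f x = 0" and "R < x"
  shows "f' x = 0"
proof -
  have "interior {0::real..} = {0<..}"
    by (rule interior_Ici[of "-1"]) simp
  then have "at x within {0..} = at x"
    using assms(2,4) by (intro at_within_interior) auto
  then have "(f has_vector_derivative f' x) (at x)"
    using assms(1)[of x] assms(2,4) by simp
  moreover have "(f has_vector_derivative 0) (at x)"
    by (rule has_vector_derivative_transform_within_open[of "\<lambda>_. 0" 0 x "{R<..}"])
       (use assms(3,4) in auto)
  ultimately show ?thesis
    by (rule vector_derivative_unique_at)
qed

lemma bounded_if_vanishes_beyond: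
  fixes f :: "real \<Rightarrow> real"
  assumes "continuous_on {0..} f" and "\<And>x. R < x \<Longrightarrow> f x = 0"
  obtains M where "\<And>x. 0 \<le> x \<Longrightarrow> \<bar>f x\<bar> \<le> M"
proof -
  have "compact (f ` {0..R})"
    by (rule compact_continuous_image) (auto intro: continuous_on_subset[OF assms(1)])
  then obtain B where B: "\<forall>y\<in>f ` {0..R}. \<bar>y\<bar> \<le> B"
    using compact_imp_bounded bounded_real by blast
  show ?thesis
  proof
    fix x :: real assume "0 \<le> x"
    show "\<bar>f x\<bar> \<le> max B 0"
    proof (cases "x \<le> R")
      case True
      then have "\<bar>f x\<bar> \<le> B" using B \<open>0 \<le> x\<close> by auto
      then show ?thesis by linarith
    next
      case False
      then show ?thesis using assms(2)[of x] by simp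
    qed
  qed
qed

lemma mult_bound_if_vanishes_beyond:
  fixes f :: "real \<Rightarrow> real"
  assumes "\<And>x. 0 \<le> x \<Longrightarrow> \<bar>f x\<bar> \<le> M" and "\<And>x. R < x \<Longrightarrow> f x = 0"
    and "0 \<le> x" and "0 \<le> R"
  shows "\<bar>x * f x\<bar> \<le> R * M"
proof (cases "x \<le> R")
  case True
  have "\<bar>x * f x\<bar> = x * \<bar>f x\<bar>"
    using assms(3) by (simp add: abs_mult)
  also have "\<dots> \<le> R * M"
    using True assms(1)[OF assms(3)] assms(3) by (intro mult_mono) auto
  finally show ?thesis .
next
  case False
  have "0 \<le> M"
    using assms(1)[OF assms(3)] by linarith
  then show ?thesis
    using False assms(2)[of x] assms(4) by simp
qed

lemma cubic_profile_mult_id: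
  fixes h h1 h2 h3 :: "real \<Rightarrow> real"
  assumes d0: "\<And>x. 0 \<le> x \<Longrightarrow> (h has_real_derivative h1 x) (at x within {0..})"
    and d1: "\<And>x. 0 \<le> x \<Longrightarrow> (h1 has_real_derivative h2 x) (at x within {0..})"
    and d2: "\<And>x. 0 \<le> x \<Longrightarrow> (h2 has_real_derivative h3 x) (at x within {0..})"
    and B0: "\<And>x. 0 \<le> x \<Longrightarrow> \<bar>h x\<bar> \<le> B0" and B1: "\<And>x. 0 \<le> x \<Longrightarrow> \<bar>h1 x\<bar> \<le> B1"
    and B2: "\<And>x. 0 \<le> x \<Longrightarrow> \<bar>h2 x\<bar> \<le> B2" and B3: "\<And>x. 0 \<le> x \<Longrightarrow> \<bar>h3 x\<bar> \<le> B3"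
    and R: "0 \<le> R" and h0: "\<And>x. R \<le> x \<Longrightarrow> h x = 0"
    and h1z: "\<And>x. R < x \<Longrightarrow> h1 x = 0" and h2z: "\<And>x. R < x \<Longrightarrow> h2 x = 0"
    and h3z: "\<And>x. R < x \<Longrightarrow> h3 x = 0"
  shows "cubic_profile (\<lambda>u. u * h u) (\<lambda>u. h u + u * h1 u) (\<lambda>u. 2 * h1 u + u * h2 u)
      (\<lambda>u. 3 * h2 u + u * h3 u) (B0 + R * B1) (2 * B1 + R * B2) (3 * B2 + R * B3) R 0"
proof
  show "\<bar>h v + v * h1 v\<bar> \<le> B0 + R * B1"
    and "\<bar>2 * h1 v + v * h2 v\<bar> \<le> 2 * B1 + R * B2"
    and "\<bar>3 * h2 v + v * h3 v\<bar> \<le> 3 * B2 + R * B3" if "0 \<le> v" for v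
    using B0[OF that] B1[OF that] B2[OF that]
      mult_bound_if_vanishes_beyond[of h1 B1 R v, OF B1 h1z that R]
      mult_bound_if_vanishes_beyond[of h2 B2 R v, OF B2 h2z that R]
      mult_bound_if_vanishes_beyond[of h3 B3 R v, OF B3 h3z that R]
    unfolding abs_le_iff by linarith+
qed (use d0 d1 d2 R h0 in \<open>auto intro!: derivative_eq_intros\<close>)

lemma cubic_profile_of_compact_support:
  assumes "C3_half h" and vanish: "\<And>x. R0 \<le> x \<Longrightarrow> h x = 0"
  obtains p1 p2 p3 M1 M2 M3 R c where "cubic_profile (\<lambda>u. u * h u) p1 p2 p3 M1 M2 M3 R c"
    and "\<And>u. 0 \<le> u \<Longrightarrow> Ahat h u = p2 u - p1 u + p1 0"
proof -
  obtain h1 h2 h3 where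
    d0: "\<And>x. 0 \<le> x \<Longrightarrow> (h has_vector_derivative h1 x) (at x within {0..})" and
    d1: "\<And>x. 0 \<le> x \<Longrightarrow> (h1 has_vector_derivative h2 x) (at x within {0..})" and
    d2: "\<And>x. 0 \<le> x \<Longrightarrow> (h2 has_vector_derivative h3 x) (at x within {0..})" and
    c3: "continuous_on {0..} h3"
    using assms(1) unfolding C3_half_def by blast
  define R where "R = max R0 0"
  have R: "0 \<le> R" and h0: "\<And>x. R \<le> x \<Longrightarrow> h x = 0"
    using vanish by (auto simp: R_def)
  then have hz: "\<And>x. R < x \<Longrightarrow> h x = 0"
    by simp
  have h1z: "\<And>x. R < x \<Longrightarrow> h1 x = 0"
    by (rule derivative_vanishes_beyond[OF d0 R hz])
  have h2z: "\<And>x. R < x \<Longrightarrow> h2 x = 0"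
    by (rule derivative_vanishes_beyond[OF d1 R h1z])
  have h3z: "\<And>x. R < x \<Longrightarrow> h3 x = 0"
    by (rule derivative_vanishes_beyond[OF d2 R h2z])
  have c0: "continuous_on {0..} h" and c1: "continuous_on {0..} h1" and c2: "continuous_on {0..} h2"
    using d0 d1 d2 by (auto intro!: continuous_on_vector_derivative)
  obtain B0 B1 B2 B3 where
    "\<And>x. 0 \<le> x \<Longrightarrow> \<bar>h x\<bar> \<le> B0" "\<And>x. 0 \<le> x \<Longrightarrow> \<bar>h1 x\<bar> \<le> B1"
    "\<And>x. 0 \<le> x \<Longrightarrow> \<bar>h2 x\<bar> \<le> B2" "\<And>x. 0 \<le> x \<Longrightarrow> \<bar>h3 x\<bar> \<le> B3"
    using bounded_if_vanishes_beyond[OF c0 hz] bounded_if_vanishes_beyond[OF c1 h1z]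
      bounded_if_vanishes_beyond[OF c2 h2z] bounded_if_vanishes_beyond[OF c3 h3z] by metis
  moreover note d0 d1 d2
  ultimately have "cubic_profile (\<lambda>u. u * h u) (\<lambda>u. h u + u * h1 u) (\<lambda>u. 2 * h1 u + u * h2 u)
      (\<lambda>u. 3 * h2 u + u * h3 u) (B0 + R * B1) (2 * B1 + R * B2) (3 * B2 + R * B3) R 0"
    using R h0 h1z h2z h3z
    by (intro cubic_profile_mult_id) (simp_all add: has_real_derivative_iff_has_vector_derivative)
  moreover have "Ahat h u = (2 * h1 u + u * h2 u) - (h u + u * h1 u) + (h 0 + 0 * h1 0)"
    if "0 \<le> u" for u
    using Ahat_eq_derivatives[OF d0 d1 that] by (simp add: algebra_simps)
  ultimately show ?thesis
    using that by blast
qed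

lemma cubic_profile_of_constant:
  assumes const: "\<And>x. 0 \<le> x \<Longrightarrow> h x = c"
  shows "cubic_profile (\<lambda>u. u * h u) (\<lambda>_. c) (\<lambda>_. 0) (\<lambda>_. 0) \<bar>c\<bar> 0 0 0 c"
    and "\<And>u. 0 \<le> u \<Longrightarrow> Ahat h u = 0"
proof -
  show "cubic_profile (\<lambda>u. u * h u) (\<lambda>_. c) (\<lambda>_. 0) (\<lambda>_. 0) \<bar>c\<bar> 0 0 0 c"
  proof
    show "((\<lambda>u. u * h u) has_real_derivative c) (at v within {0..})" if "0 \<le> v" for v
      by (rule has_field_derivative_transform_within[of "\<lambda>u. c * u" c v "{0..}" 1])
         (use const that in \<open>auto intro!: derivative_eq_intros\<close>)
  qed (use const in auto)
  have "(h has_vector_derivative 0) (at x within {0..})" if "0 \<le> x" for x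
    by (rule has_vector_derivative_transform_within[of "\<lambda>_. c" 0 x "{0..}" 1])
       (use const that in auto)
  moreover have "((\<lambda>_. 0::real) has_vector_derivative 0) (at x within {0..})" for x
    by simp
  ultimately show "Ahat h u = 0" if "0 \<le> u" for u
    using Ahat_eq_derivatives[of h "\<lambda>_. 0" "\<lambda>_. 0" u] const[of 0] const that by simp
qed

lemma DA_cubic_profile:
  assumes "h \<in> DA"
  obtains p1 p2 p3 M1 M2 M3 R c where "cubic_profile (\<lambda>u. u * h u) p1 p2 p3 M1 M2 M3 R c"
    and "\<And>u. 0 \<le> u \<Longrightarrow> Ahat h u = p2 u - p1 u + p1 0"
proof -
  consider (compact) "C3_half h" "\<exists>R0. \<forall>x\<ge>R0. h x = 0" | (const) "\<exists>c. \<forall>x\<ge>0. h x = c"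
    using assms unfolding DA_def by blast
  then show ?thesis
  proof cases
    case compact
    then obtain R0 where "\<And>x. R0 \<le> x \<Longrightarrow> h x = 0"
      by blast
    with compact(1) show ?thesis
      using that by (rule cubic_profile_of_compact_support)
  next
    case const
    then obtain c where c: "\<And>x. 0 \<le> x \<Longrightarrow> h x = c"
      by blast
    show ?thesis
    proof (rule that)
      show "cubic_profile (\<lambda>u. u * h u) (\<lambda>_. c) (\<lambda>_. 0) (\<lambda>_. 0) \<bar>c\<bar> 0 0 0 c"
        by (rule cubic_profile_of_constant(1)[OF c])
      show "Ahat h u = 0 - c + c" if "0 \<le> u" for u
        using cubic_profile_of_constant(2)[OF c that] by simp
    qed
  qed
qed

section \<open>The generator on the observable\<close>

definition site_term :: "nat \<Rightarrow> nat \<Rightarrow> real \<Rightarrow> (real \<Rightarrow> real) \<Rightarrow> nat \<Rightarrow> real" where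
  "site_term L N d h k = real k / real N * h (d * real L * real k / real N)"

lemma muhat_eq_sum_site_term: "muhat L N d \<xi> h = (\<Sum>z<L. site_term L N d h (\<xi> z))"
  by (simp add: muhat_def site_term_def)

lemma Omega_sum: "\<eta> \<in> Omega L N \<Longrightarrow> (\<Sum>x<L. real (\<eta> x)) = real N"
  unfolding Omega_def by (simp flip: of_nat_sum)

lemma Omega_nonempty: "1 \<le> L \<Longrightarrow> Omega L N \<noteq> {}"
proof -
  assume "1 \<le> L"
  then have "(\<lambda>z. if z = 0 then N else 0) \<in> Omega L N"
    unfolding Omega_def by auto
  then show ?thesis by blast
qed

lemma sum_remove_two:
  fixes f :: "'b \<Rightarrow> 'a::comm_monoid_add"
  assumes "finite A" "x \<in> A" "y \<in> A" "x \<noteq> y"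
  shows "sum f A = f x + f y + sum f (A - {x} - {y})"
proof -
  have "sum f A = f x + sum f (A - {x})"
    using assms by (simp add: sum.remove)
  also have "sum f (A - {x}) = f y + sum f (A - {x} - {y})"
    using assms by (simp add: sum.remove)
  finally show ?thesis
    by (simp add: add.assoc)
qed

lemma muhat_move:
  assumes "x < L" "y < L" "x \<noteq> y"
  shows "muhat L N d (move \<eta> x y) h - muhat L N d \<eta> h =
    (site_term L N d h (\<eta> x - 1) - site_term L N d h (\<eta> x))
      + (site_term L N d h (\<eta> y + 1) - site_term L N d h (\<eta> y))"
proof -
  have "(\<Sum>z\<in>{..<L} - {x} - {y}. site_term L N d h (move \<eta> x y z))
      = (\<Sum>z\<in>{..<L} - {x} - {y}. site_term L N d h (\<eta> z))"
    by (rule sum.cong) (auto simp: move_def)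
  moreover have "x \<in> {..<L}" "y \<in> {..<L}"
    using assms by auto
  ultimately show ?thesis
    unfolding muhat_eq_sum_site_term
      sum_remove_two[OF finite_lessThan \<open>x \<in> {..<L}\<close> \<open>y \<in> {..<L}\<close> \<open>x \<noteq> y\<close>]
    using assms by (simp add: move_def)
qed

text \<open>
  Summing the jump rates over the partner site turns the double sum into a sum over sites;
  the total mass enters through \<open>\<Sum>\<^sub>y (d + \<eta>\<^sub>y) = dL + N\<close>.
\<close>
lemma gen_muhat_eq_site_sum:
  fixes d :: real and h :: "real \<Rightarrow> real"
  assumes "\<eta> \<in> Omega L N"
  defines "A \<equiv> (\<lambda>k. site_term L N d h (k - 1) - site_term L N d h k)"
    and "B \<equiv> (\<lambda>k. site_term L N d h (k + 1) - site_term L N d h k)"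
  shows "gen L d (\<lambda>\<xi>. muhat L N d \<xi> h) \<eta> =
    (\<Sum>x<L. real (\<eta> x) * (d * real L + real N - d - real (\<eta> x)) * A (\<eta> x)
          + (d + real (\<eta> x)) * (real N - real (\<eta> x)) * B (\<eta> x))"
proof -
  note mass = Omega_sum[OF assms(1)]
  have "gen L d (\<lambda>\<xi>. muhat L N d \<xi> h) \<eta> =
     (\<Sum>x<L. \<Sum>y\<in>{..<L} - {x}. real (\<eta> x) * A (\<eta> x) * (d + real (\<eta> y))
         + real (\<eta> x) * ((d + real (\<eta> y)) * B (\<eta> y)))"
    unfolding gen_def
    by (intro sum.cong refl, subst muhat_move) (auto simp: A_def B_def algebra_simps)
  also have "\<dots> = (\<Sum>x<L. real (\<eta> x) * A (\<eta> x) * (\<Sum>y\<in>{..<L} - {x}. d + real (\<eta> y))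
        + real (\<eta> x) * (\<Sum>y\<in>{..<L} - {x}. (d + real (\<eta> y)) * B (\<eta> y)))"
    by (simp only: sum_distrib_left flip: sum.distrib)
  also have "\<dots> = (\<Sum>x<L. real (\<eta> x) * A (\<eta> x) * (d * real L + real N - d - real (\<eta> x))
        + (real (\<eta> x) * (\<Sum>y<L. (d + real (\<eta> y)) * B (\<eta> y))
           - real (\<eta> x) * ((d + real (\<eta> x)) * B (\<eta> x))))"
    by (intro sum.cong refl) (simp add: sum_diff1 sum.distrib mass algebra_simps)
  also have "\<dots> = (\<Sum>x<L. real (\<eta> x) * A (\<eta> x) * (d * real L + real N - d - real (\<eta> x))
        - real (\<eta> x) * ((d + real (\<eta> x)) * B (\<eta> x)))
        + real N * (\<Sum>y<L. (d + real (\<eta> y)) * B (\<eta> y))"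
    by (simp add: sum.distrib sum_subtractf sum_distrib_right[symmetric] mass algebra_simps)
  also have "\<dots> = (\<Sum>x<L. real (\<eta> x) * (d * real L + real N - d - real (\<eta> x)) * A (\<eta> x)
          + (d + real (\<eta> x)) * (real N - real (\<eta> x)) * B (\<eta> x))"
    by (simp add: sum_distrib_left sum.distrib[symmetric] sum_subtractf[symmetric] algebra_simps)
  finally show ?thesis .
qed

lemma gen_muhat_eq_differences:
  fixes p h :: "real \<Rightarrow> real"
  assumes p_eq: "\<And>u. 0 \<le> u \<Longrightarrow> p u = u * h u"
    and "1 \<le> L" "1 \<le> N" "0 < d" and \<eta>: "\<eta> \<in> Omega L N"
  defines "a \<equiv> d * L / N"
  shows "gen L d (\<lambda>\<xi>. muhat L N d \<xi> h) \<eta> / (d * L)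
      = (\<Sum>x<L. (\<eta> x * (d * L + N - d - \<eta> x) * (p (a * \<eta> x - a) - p (a * \<eta> x))
            + (d + \<eta> x) * (real N - \<eta> x) * (p (a * \<eta> x + a) - p (a * \<eta> x))) / (d * L)^2)"
proof -
  have N: "0 < real N" and L: "0 < real L" and "0 < a"
    using assms by (auto simp: a_def)
  have site: "site_term L N d h k = p (a * k) / (d * L)" for k
    using p_eq[of "a * k"] \<open>0 < a\<close> N L \<open>0 < d\<close> by (simp add: site_term_def a_def field_simps)
  have forward: "site_term L N d h (k + 1) - site_term L N d h k = (p (a * k + a) - p (a * k)) / (d * L)"
    for k
    by (simp add: site diff_divide_distrib algebra_simps)
  have backward: "real k * w * (site_term L N d h (k - 1) - site_term L N d h k)
      = real k * w * ((p (a * k - a) - p (a * k)) / (d * L))" for k w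
    by (cases "k = 0") (simp_all add: site diff_divide_distrib of_nat_diff algebra_simps)
  have site_sum: "(k * (d * L + N - d - k) * (site_term L N d h (k - 1) - site_term L N d h k)
        + (d + k) * (real N - k) * (site_term L N d h (k + 1) - site_term L N d h k)) / (d * L)
      = (k * (d * L + N - d - k) * (p (a * k - a) - p (a * k))
            + (d + k) * (real N - k) * (p (a * k + a) - p (a * k))) / (d * L)^2" for k
    unfolding backward forward using \<open>0 < d\<close> L by (simp add: field_simps power2_eq_square)
  show ?thesis
    by (simp only: gen_muhat_eq_site_sum[OF \<eta>] sum_divide_distrib site_sum)
qed

section \<open>The error at a single site\<close>

text \<open>
  \<open>Dp\<close>, \<open>Dm\<close> stand for the forward and backward differences of \<open>p\<close> at \<open>ak\<close>, and
  \<open>P1\<close>, \<open>P2\<close>, \<open>P10\<close> for \<open>p'(ak)\<close>, \<open>p''(ak)\<close>, \<open>p'(0)\<close>. The term \<open>P10 (k/N - 1/L)\<close>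
  sums to zero over the sites; it centres \<open>P1\<close> at \<open>P10\<close>.
\<close>
lemma site_error_identity:
  fixes N L d a k P1 P2 P10 Dp Dm :: real
  assumes "0 < N" "0 < L" "0 < d" "a = d * L / N"
  defines "X \<equiv> Dp - a * P1 - a^2/2 * P2" and "Y \<equiv> Dm + a * P1 - a^2/2 * P2"
  shows "(k * (d * L + N - d - k) * Dm + (d + k) * (N - k) * Dp) / (d * L)^2
           - k / N * (P2 - P1 + P10) + P10 * (k / N - 1 / L)
       = k / N * ((X + Y) / a^2) + k / N * ((a^2/2 * P2 + Y) / a)
         - k / N * ((a * k) * (Dp + Dm) / (a^2 * (d * L))) - k / N * ((Dp + Dm) / (a * L))
         + (P1 - P10) / L + (a * P2 / 2 + X / a) / L"
  using assms(1-3) unfolding assms(4) X_def Y_def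
  by (simp add: field_simps power2_eq_square)

lemma abs_mult_ratio_le:
  fixes k N Z B :: real
  assumes "0 \<le> k" "0 < N" "k \<noteq> 0 \<Longrightarrow> \<bar>Z\<bar> \<le> B"
  shows "\<bar>k / N * Z\<bar> \<le> k / N * B"
proof (cases "k = 0")
  case False
  then have "\<bar>k / N * Z\<bar> = k / N * \<bar>Z\<bar>"
    using assms by (simp add: abs_mult)
  also have "\<dots> \<le> k / N * B"
    using assms False by (intro mult_left_mono) auto
  finally show ?thesis .
qed simp

lemma abs_divide_le:
  fixes Z B c :: real
  assumes "\<bar>Z\<bar> \<le> B" "0 < c"
  shows "\<bar>Z / c\<bar> \<le> B / c"
  using assms by (simp add: divide_right_mono)

lemma site_error_estimate:
  fixes N L d a k P1 P2 P10 Dp Dm M1 M2 M3 R :: real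
  assumes pos: "0 < N" "0 < L" "0 < d" "0 \<le> k" and a: "a = d * L / N"
    and taylor_Dp: "\<bar>Dp - a * P1 - a^2/2 * P2\<bar> \<le> M3 * a^3"
    and taylor_Dm: "k \<noteq> 0 \<Longrightarrow> \<bar>Dm + a * P1 - a^2/2 * P2\<bar> \<le> M3 * a^3"
    and lip_Dp: "\<bar>Dp\<bar> \<le> M1 * a"
    and lip_Dm: "k \<noteq> 0 \<Longrightarrow> \<bar>Dm\<bar> \<le> M1 * a"
    and bound_P2: "\<bar>P2\<bar> \<le> M2"
    and lip_P1: "\<bar>P1 - P10\<bar> \<le> M2 * (a * k)"
    and second: "k \<noteq> 0 \<Longrightarrow> (a * k) * \<bar>Dp + Dm\<bar> \<le> (R + a) * (a^2 * M2 + 2 * a^3 * M3)"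
  shows "\<bar>(k * (d * L + N - d - k) * Dm + (d + k) * (N - k) * Dp) / (d * L)^2
           - k / N * (P2 - P1 + P10) + P10 * (k / N - 1 / L)\<bar>
         \<le> k / N * (2 * M3 * a + (a * M2 / 2 + M3 * a^2) + (R + a) * (M2 + 2 * a * M3) / (d * L)
                    + 2 * M1 / L + M2 * d)
           + (a * M2 / 2 + M3 * a^2) / L"
proof -
  define X where "X = Dp - a * P1 - a^2/2 * P2"
  define Y where "Y = Dm + a * P1 - a^2/2 * P2"
  have a_pos: "0 < a"
    using pos a by simp
  have b1: "\<bar>k / N * ((X + Y) / a^2)\<bar> \<le> k / N * (2 * M3 * a)"
  proof (rule abs_mult_ratio_le[OF pos(4,1)])
    assume "k \<noteq> 0"
    have "\<bar>X + Y\<bar> \<le> 2 * M3 * a^3"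
      using taylor_Dp taylor_Dm[OF \<open>k \<noteq> 0\<close>] unfolding X_def Y_def by linarith
    then have "\<bar>(X + Y) / a^2\<bar> \<le> 2 * M3 * a^3 / a^2"
      using a_pos by (intro abs_divide_le) auto
    also have "\<dots> = 2 * M3 * a"
      using a_pos by (simp add: power2_eq_square power3_eq_cube)
    finally show "\<bar>(X + Y) / a^2\<bar> \<le> 2 * M3 * a" .
  qed
  have b2: "\<bar>k / N * ((a^2/2 * P2 + Y) / a)\<bar> \<le> k / N * (a * M2 / 2 + M3 * a^2)"
  proof (rule abs_mult_ratio_le[OF pos(4,1)])
    assume "k \<noteq> 0"
    have "\<bar>a^2/2 * P2\<bar> \<le> a^2/2 * M2"
      using bound_P2 by (simp add: abs_mult mult_left_mono)
    then have "\<bar>(a^2/2 * P2 + Y) / a\<bar> \<le> (a^2/2 * M2 + M3 * a^3) / a"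
      using taylor_Dm \<open>k \<noteq> 0\<close> a_pos unfolding Y_def by (intro abs_divide_le) auto
    also have "\<dots> = a * M2 / 2 + M3 * a^2"
      using a_pos by (simp add: field_simps power2_eq_square power3_eq_cube)
    finally show "\<bar>(a^2/2 * P2 + Y) / a\<bar> \<le> a * M2 / 2 + M3 * a^2" .
  qed
  have b3: "\<bar>k / N * ((a * k) * (Dp + Dm) / (a^2 * (d * L)))\<bar> \<le> k / N * ((R + a) * (M2 + 2 * a * M3) / (d * L))"
  proof (rule abs_mult_ratio_le[OF pos(4,1)])
    assume "k \<noteq> 0"
    have "\<bar>(a * k) * (Dp + Dm)\<bar> \<le> (R + a) * (a^2 * M2 + 2 * a^3 * M3)"
      using second[OF \<open>k \<noteq> 0\<close>] a_pos pos by (simp add: abs_mult)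
    then have "\<bar>(a * k) * (Dp + Dm) / (a^2 * (d * L))\<bar> \<le> (R + a) * (a^2 * M2 + 2 * a^3 * M3) / (a^2 * (d * L))"
      using a_pos pos by (intro abs_divide_le) auto
    also have "\<dots> = (R + a) * (M2 + 2 * a * M3) / (d * L)"
      using a_pos pos by (simp add: field_simps power2_eq_square power3_eq_cube)
    finally show "\<bar>(a * k) * (Dp + Dm) / (a^2 * (d * L))\<bar> \<le> (R + a) * (M2 + 2 * a * M3) / (d * L)" .
  qed
  have b4: "\<bar>k / N * ((Dp + Dm) / (a * L))\<bar> \<le> k / N * (2 * M1 / L)"
  proof (rule abs_mult_ratio_le[OF pos(4,1)])
    assume "k \<noteq> 0"
    then have "\<bar>(Dp + Dm) / (a * L)\<bar> \<le> 2 * M1 * a / (a * L)"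
      using lip_Dp lip_Dm a_pos pos by (intro abs_divide_le) auto
    also have "\<dots> = 2 * M1 / L"
      using a_pos by simp
    finally show "\<bar>(Dp + Dm) / (a * L)\<bar> \<le> 2 * M1 / L" .
  qed
  have b5: "\<bar>(P1 - P10) / L\<bar> \<le> k / N * (M2 * d)"
  proof -
    have "\<bar>(P1 - P10) / L\<bar> \<le> M2 * (a * k) / L"
      using lip_P1 pos by (intro abs_divide_le) auto
    also have "\<dots> = k / N * (M2 * d)"
      using pos a by (simp add: field_simps)
    finally show ?thesis .
  qed
  have b6: "\<bar>(a * P2 / 2 + X / a) / L\<bar> \<le> (a * M2 / 2 + M3 * a^2) / L"
  proof -
    have "\<bar>a * P2 / 2\<bar> \<le> a * M2 / 2"
      using bound_P2 a_pos by (simp add: abs_mult mult_left_mono)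
    moreover have "\<bar>X / a\<bar> \<le> M3 * a^3 / a"
      using taylor_Dp a_pos unfolding X_def by (intro abs_divide_le) auto
    moreover have "M3 * a^3 / a = M3 * a^2"
      using a_pos by (simp add: power2_eq_square power3_eq_cube)
    ultimately have "\<bar>a * P2 / 2 + X / a\<bar> \<le> a * M2 / 2 + M3 * a^2"
      by linarith
    then show ?thesis
      using pos by (intro abs_divide_le) auto
  qed
  show ?thesis
    unfolding site_error_identity[OF pos(1-3) a] X_def[symmetric] Y_def[symmetric]
    using b1 b2 b3 b4 b5 b6 by (simp only: distrib_left)
qed

section \<open>Uniform error bound and convergence\<close>

context cubic_profile
begin

definition gen_error :: "real \<Rightarrow> real \<Rightarrow> real \<Rightarrow> real" where
  "gen_error a d L = a * (M2 + 2 * M3) + 2 * M3 * a^2 + 2 * M1 / L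
     + (R + a) * (M2 + 2 * a * M3) / (d * L) + M2 * d"

lemma site_error_bound:
  fixes N L d a :: real and k :: nat
  assumes "0 < N" "0 < L" "0 < d" and a: "a = d * L / N"
  shows "\<bar>(k * (d * L + N - d - k) * (p (a * k - a) - p (a * k))
            + (d + k) * (N - k) * (p (a * k + a) - p (a * k))) / (d * L)^2
          - k / N * (p2 (a * k) - p1 (a * k) + p1 0) + p1 0 * (k / N - 1 / L)\<bar>
        \<le> k / N * (2 * M3 * a + (a * M2 / 2 + M3 * a^2) + (R + a) * (M2 + 2 * a * M3) / (d * L)
                    + 2 * M1 / L + M2 * d)
          + (a * M2 / 2 + M3 * a^2) / L"
proof (rule site_error_estimate[OF assms(1-3) _ a])
  let ?u = "a * k"
  have "0 < a"
    using assms by simp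
  then have u: "0 \<le> ?u"
    by simp
  show "\<bar>p (?u + a) - p ?u - a * p1 ?u - a^2/2 * p2 ?u\<bar> \<le> M3 * a^3"
    using taylor_plus[OF u] \<open>0 < a\<close> by simp
  show "\<bar>p (?u + a) - p ?u\<bar> \<le> M1 * a"
    using derivative_bound_Ici[OF has_deriv_p bound_p1, of "?u + a" ?u] u \<open>0 < a\<close> by simp
  show "\<bar>p2 ?u\<bar> \<le> M2"
    using bound_p2 u by simp
  show "\<bar>p1 ?u - p1 0\<bar> \<le> M2 * ?u"
    using derivative_bound_Ici[OF has_deriv_p1 bound_p2, of ?u 0] u by simp
  assume "real k \<noteq> 0"
  then have u_a: "a \<le> ?u"
    using \<open>0 < a\<close> by simp
  show "\<bar>p (?u - a) - p ?u + a * p1 ?u - a^2/2 * p2 ?u\<bar> \<le> M3 * a^3"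
    using taylor_minus[OF u_a] \<open>0 < a\<close> by simp
  show "\<bar>p (?u - a) - p ?u\<bar> \<le> M1 * a"
    using derivative_bound_Ici[OF has_deriv_p bound_p1, of "?u - a" ?u] u_a \<open>0 < a\<close> by simp
  have "p (?u + a) - p ?u + (p (?u - a) - p ?u) = p (?u + a) + p (?u - a) - 2 * p ?u"
    by simp
  then show "?u * \<bar>p (?u + a) - p ?u + (p (?u - a) - p ?u)\<bar> \<le> (R + a) * (a^2 * M2 + 2 * a^3 * M3)"
    using weighted_second_difference_bound[OF _ u_a] \<open>0 < a\<close> by simp
qed simp

lemma gen_muhat_error_bound:
  assumes p_eq: "\<And>u. 0 \<le> u \<Longrightarrow> p u = u * h u"
    and Ahat_eq: "\<And>u. 0 \<le> u \<Longrightarrow> Ahat h u = p2 u - p1 u + p1 0"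
    and "1 \<le> L" "1 \<le> N" "0 < d" and \<eta>: "\<eta> \<in> Omega L N"
  shows "\<bar>gen L d (\<lambda>\<xi>. muhat L N d \<xi> h) \<eta> / (d * L) - muhat L N d \<eta> (Ahat h)\<bar>
    \<le> gen_error (d * L / N) d L"
proof -
  define a where "a = d * L / N"
  have N: "0 < real N" and L: "0 < real L"
    using assms by auto
  define S where "S k = (k * (d * L + N - d - k) * (p (a * k - a) - p (a * k))
            + (d + k) * (real N - k) * (p (a * k + a) - p (a * k))) / (d * L)^2
          - k / N * (p2 (a * k) - p1 (a * k) + p1 0) + p1 0 * (k / N - 1 / L)" for k :: nat
  define c1 where "c1 = 2 * M3 * a + (a * M2 / 2 + M3 * a^2) + (R + a) * (M2 + 2 * a * M3) / (d * L)
                    + 2 * M1 / L + M2 * d"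
  define c2 where "c2 = a * M2 / 2 + M3 * a^2"
  have gen_eq: "gen L d (\<lambda>\<xi>. muhat L N d \<xi> h) \<eta> / (d * L)
      = (\<Sum>x<L. (\<eta> x * (d * L + N - d - \<eta> x) * (p (a * \<eta> x - a) - p (a * \<eta> x))
            + (d + \<eta> x) * (real N - \<eta> x) * (p (a * \<eta> x + a) - p (a * \<eta> x))) / (d * L)^2)"
    unfolding a_def by (rule gen_muhat_eq_differences[OF p_eq assms(3-6)])
  have mu_eq: "muhat L N d \<eta> (Ahat h) = (\<Sum>x<L. \<eta> x / N * (p2 (a * \<eta> x) - p1 (a * \<eta> x) + p1 0))"
    unfolding muhat_def using \<open>0 < d\<close> by (intro sum.cong refl) (simp add: Ahat_eq a_def)
  have centred: "(\<Sum>x<L. p1 0 * (\<eta> x / N - 1 / L)) = 0"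
    using Omega_sum[OF \<eta>] N L
    by (simp add: sum_subtractf sum_divide_distrib[symmetric] sum_distrib_left[symmetric])
  have "gen L d (\<lambda>\<xi>. muhat L N d \<xi> h) \<eta> / (d * L) - muhat L N d \<eta> (Ahat h)
      = (\<Sum>x<L. S (\<eta> x))"
    unfolding gen_eq mu_eq S_def using centred by (simp add: sum.distrib sum_subtractf)
  also have "\<bar>\<dots>\<bar> \<le> (\<Sum>x<L. real (\<eta> x) / N * c1 + c2 / L)"
    unfolding S_def c1_def c2_def
    by (rule order_trans[OF sum_abs sum_mono]) (rule site_error_bound[OF N L \<open>0 < d\<close> a_def])
  also have "\<dots> = (\<Sum>x<L. real (\<eta> x)) / N * c1 + c2"
    using L by (simp add: sum.distrib sum_divide_distrib sum_distrib_right)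
  also have "\<dots> = gen_error a d L"
    using Omega_sum[OF \<eta>] N by (simp add: c1_def c2_def gen_error_def algebra_simps)
  finally show ?thesis
    unfolding a_def .
qed

lemma SUP_gen_muhat_error_bound:
  assumes p_eq: "\<And>u. 0 \<le> u \<Longrightarrow> p u = u * h u"
    and Ahat_eq: "\<And>u. 0 \<le> u \<Longrightarrow> Ahat h u = p2 u - p1 u + p1 0"
    and "1 \<le> L" "1 \<le> N" "0 < d"
  shows "0 \<le> (SUP \<eta>\<in>Omega L N. \<bar>gen L d (\<lambda>\<xi>. muhat L N d \<xi> h) \<eta> / (d * L) - muhat L N d \<eta> (Ahat h)\<bar>)
     \<and> (SUP \<eta>\<in>Omega L N. \<bar>gen L d (\<lambda>\<xi>. muhat L N d \<xi> h) \<eta> / (d * L) - muhat L N d \<eta> (Ahat h)\<bar>)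
       \<le> gen_error (d * L / N) d L"
    (is "0 \<le> (SUP \<eta>\<in>_. ?err \<eta>) \<and> _ \<le> ?bound")
proof
  have bound: "?err \<eta> \<le> ?bound" if "\<eta> \<in> Omega L N" for \<eta>
    by (rule gen_muhat_error_bound[OF p_eq Ahat_eq assms(3-5) that])
  obtain \<eta>0 where "\<eta>0 \<in> Omega L N"
    using Omega_nonempty[OF assms(3)] by blast
  moreover have "bdd_above (?err ` Omega L N)"
    using bound by (intro bdd_aboveI2)
  ultimately show "0 \<le> (SUP \<eta>\<in>Omega L N. ?err \<eta>)"
    by (meson abs_ge_zero cSUP_upper2)
  show "(SUP \<eta>\<in>Omega L N. ?err \<eta>) \<le> ?bound"
    using bound Omega_nonempty[OF assms(3)] by (intro cSUP_least) auto
qed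

lemma gen_error_tendsto_zero:
  assumes "(a \<longlongrightarrow> 0) F" "(d \<longlongrightarrow> 0) F" "filterlim L at_top F"
    and "filterlim (\<lambda>x. d x * L x) at_top F"
  shows "((\<lambda>x. gen_error (a x) (d x) (L x)) \<longlongrightarrow> 0) F"
proof -
  have "((\<lambda>x. inverse (L x)) \<longlongrightarrow> 0) F"
    using assms(3) by (rule tendsto_inverse_0_at_top)
  moreover have "((\<lambda>x. inverse (d x * L x)) \<longlongrightarrow> 0) F"
    using assms(4) by (rule tendsto_inverse_0_at_top)
  ultimately have "((\<lambda>x. a x * (M2 + 2 * M3) + 2 * M3 * (a x)^2 + 2 * M1 * inverse (L x)
      + (R + a x) * (M2 + 2 * a x * M3) * inverse (d x * L x) + M2 * d x)
      \<longlongrightarrow> 0 * (M2 + 2 * M3) + 2 * M3 * 0^2 + 2 * M1 * 0 + (R + 0) * (M2 + 2 * 0 * M3) * 0 + M2 * 0) F"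
    by (intro tendsto_intros assms(1,2))
  then show ?thesis
    by (simp add: gen_error_def divide_inverse)
qed

lemma SUP_gen_muhat_error_tendsto_zero:
  fixes d :: "nat \<Rightarrow> real" and Ls Ns :: "nat \<Rightarrow> nat"
  assumes p_eq: "\<And>u. 0 \<le> u \<Longrightarrow> p u = u * h u"
    and Ahat_eq: "\<And>u. 0 \<le> u \<Longrightarrow> Ahat h u = p2 u - p1 u + p1 0"
    and d_pos: "\<And>L. 0 < d L" and d_lim: "d \<longlonglongrightarrow> 0"
    and dL_lim: "filterlim (\<lambda>L. d L * real L) at_top sequentially"
    and Ls: "filterlim Ls at_top sequentially" and Ns: "filterlim Ns at_top sequentially"
    and density: "(\<lambda>k. real (Ns k) / real (Ls k)) \<longlonglongrightarrow> \<rho>" "0 < \<rho>"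
  shows "(\<lambda>k. SUP \<eta>\<in>Omega (Ls k) (Ns k).
            \<bar>gen (Ls k) (d (Ls k)) (\<lambda>\<xi>. muhat (Ls k) (Ns k) (d (Ls k)) \<xi> h) \<eta> / (d (Ls k) * real (Ls k))
             - muhat (Ls k) (Ns k) (d (Ls k)) \<eta> (Ahat h)\<bar>) \<longlonglongrightarrow> 0"
proof -
  have "(\<lambda>k. d (Ls k) / (real (Ns k) / real (Ls k))) \<longlonglongrightarrow> 0 / \<rho>"
    using filterlim_compose[OF d_lim Ls] density by (intro tendsto_divide) auto
  then have "(\<lambda>k. d (Ls k) * real (Ls k) / real (Ns k)) \<longlonglongrightarrow> 0"
    by simp
  moreover have "filterlim (\<lambda>k. real (Ls k)) at_top sequentially"
    using filterlim_compose[OF filterlim_real_sequentially Ls] .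
  ultimately have err: "(\<lambda>k. gen_error (d (Ls k) * real (Ls k) / real (Ns k)) (d (Ls k)) (real (Ls k)))
      \<longlonglongrightarrow> 0"
    using filterlim_compose[OF d_lim Ls] filterlim_compose[OF dL_lim Ls]
    by (intro gen_error_tendsto_zero) (simp_all add: o_def)
  have large: "\<forall>\<^sub>F k in sequentially. 1 \<le> Ls k \<and> 1 \<le> Ns k"
    using Ls Ns unfolding filterlim_at_top by (intro eventually_conj; blast)
  show ?thesis
    by (rule tendsto_sandwich[OF _ _ tendsto_const err]; rule eventually_mono[OF large])
       (simp_all add: SUP_gen_muhat_error_bound[OF p_eq Ahat_eq] d_pos)
qed

end

theorem lemma3p2:
  fixes \<rho> :: real and d :: "nat \<Rightarrow> real" and h :: "real \<Rightarrow> real"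
  assumes "\<rho> > 0"
    and "\<And>L. d L > 0"
    and "d \<longlonglongrightarrow> 0"
    and "filterlim (\<lambda>L. d L * real L) at_top sequentially"
    and "h \<in> DA"
  shows "\<forall>Ls Ns :: nat \<Rightarrow> nat.
           filterlim Ls at_top sequentially \<longrightarrow> filterlim Ns at_top sequentially \<longrightarrow>
           (\<lambda>k. real (Ns k) / real (Ls k)) \<longlonglongrightarrow> \<rho> \<longrightarrow>
           (\<lambda>k. SUP \<eta>\<in>Omega (Ls k) (Ns k).
               \<bar>gen (Ls k) (d (Ls k)) (\<lambda>\<xi>. muhat (Ls k) (Ns k) (d (Ls k)) \<xi> h) \<eta>
                  / (d (Ls k) * real (Ls k))
                - muhat (Ls k) (Ns k) (d (Ls k)) \<eta> (Ahat h)\<bar>) \<longlonglongrightarrow> 0"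
proof (rule DA_cubic_profile[OF assms(5)])
  fix p1 p2 p3 M1 M2 M3 R c
  assume "cubic_profile (\<lambda>u. u * h u) p1 p2 p3 M1 M2 M3 R c"
    and "\<And>u. 0 \<le> u \<Longrightarrow> Ahat h u = p2 u - p1 u + p1 0"
  then show ?thesis
    using cubic_profile.SUP_gen_muhat_error_tendsto_zero[of "\<lambda>u. u * h u"] assms(1-4) by blast
qed

end
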